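(* Let $f\geq 1$, $\mathbf{K}=\mathbf{Q}(\zeta_f)$, $n=\varphi(f)$, and let $A$ be a $d\times d$ unitriangular matrix (upper triangular with ones on the diagonal) with coefficients in $\mathbf{K}$ such that every coefficient, written in the power basis $1,\zeta_f,\dots,\zeta_f^{n-1}$, has all its rational coordinates bounded by $1$ in absolute value. Then $\|A\|\leq dn^{3/2}$ and $\|A^{-1}\|=(2n)^{O(d)}$.
   Context: $\mathbf{K}^d$ carries the Hermitian form $\langle x,y\rangle=\sum_t\mathrm{tr}_{\mathbf{K}/\mathbf{Q}}(x_t\overline{y_t})$ and $\|\cdot\|$ is the induced operator norm on matrices. *)

theory Defs
  imports Complex_Main "HOL-Number_Theory.Number_Theory"
begin

text \<open>The cyclotomic field K = Q(zeta_f) is realised inside the complex numbers,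
  with zeta_f = exp(2 pi i / f).  Its degree is n = totient f.\<close>

definition zeta :: "nat \<Rightarrow> complex" where
  "zeta f = cis (2 * pi / real f)"

definition powbasis_comb :: "nat \<Rightarrow> (nat \<Rightarrow> rat) \<Rightarrow> complex" where
  "powbasis_comb f c = (\<Sum>j<totient f. of_rat (c j) * zeta f ^ j)"

definition Kf :: "nat \<Rightarrow> complex set" where
  "Kf f = {z. \<exists>c. z = powbasis_comb f c}"

definition coords :: "nat \<Rightarrow> complex \<Rightarrow> nat \<Rightarrow> rat" where
  "coords f z = (THE c. (\<forall>j. totient f \<le> j \<longrightarrow> c j = 0) \<and> z = powbasis_comb f c)"

text \<open>The Galois automorphism sigma_k : zeta \<mapsto> zeta^k (k coprime to f).\<close>
definition sigma :: "nat \<Rightarrow> nat \<Rightarrow> complex \<Rightarrow> complex" where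
  "sigma f k z = (\<Sum>j<totient f. of_rat (coords f z j) * zeta f ^ (j * k))"

definition trK :: "nat \<Rightarrow> complex \<Rightarrow> complex" where
  "trK f z = (\<Sum>k\<in>{k\<in>{1..f}. coprime k f}. sigma f k z)"

text \<open>Vectors in K^d are modelled as functions nat => complex, coordinates t < d.\<close>
definition herm :: "nat \<Rightarrow> nat \<Rightarrow> (nat \<Rightarrow> complex) \<Rightarrow> (nat \<Rightarrow> complex) \<Rightarrow> complex" where
  "herm f d x y = (\<Sum>t<d. trK f (x t * cnj (y t)))"

definition vnorm :: "nat \<Rightarrow> nat \<Rightarrow> (nat \<Rightarrow> complex) \<Rightarrow> real" where
  "vnorm f d x = sqrt (Re (herm f d x x))"

definition mulv :: "nat \<Rightarrow> (nat \<Rightarrow> nat \<Rightarrow> complex) \<Rightarrow> (nat \<Rightarrow> complex) \<Rightarrow> nat \<Rightarrow> complex" where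
  "mulv d A x = (\<lambda>i. \<Sum>j<d. A i j * x j)"

definition matmul :: "nat \<Rightarrow> (nat \<Rightarrow> nat \<Rightarrow> complex) \<Rightarrow> (nat \<Rightarrow> nat \<Rightarrow> complex) \<Rightarrow> nat \<Rightarrow> nat \<Rightarrow> complex" where
  "matmul d A B = (\<lambda>i k. \<Sum>j<d. A i j * B j k)"

definition opnorm :: "nat \<Rightarrow> nat \<Rightarrow> (nat \<Rightarrow> nat \<Rightarrow> complex) \<Rightarrow> real" where
  "opnorm f d A = Sup {vnorm f d (mulv d A x) / vnorm f d x | x.
      (\<forall>t<d. x t \<in> Kf f) \<and> (\<exists>t<d. x t \<noteq> 0)}"

end

theory Submission
  imports Defs "Berlekamp_Zassenhaus.Factor_Bound" "HOL-Analysis.Convex"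
begin

text \<open>For \<open>k\<close> coprime to \<open>f\<close> let \<open>\<sigma>\<^sub>k\<close> be the embedding \<open>\<zeta> \<mapsto> \<zeta>\<^sup>k\<close> of \<open>K\<close> into \<open>\<complex>\<close>.
  Since \<open>tr(z conj z) = \<Sum>\<^sub>k |\<sigma>\<^sub>k z|\<^sup>2\<close>, the Hermitian norm on \<open>K\<^sup>d\<close> is Euclidean in the
  coordinates \<open>\<sigma>\<^sub>k(x\<^sub>t)\<close>, and a matrix whose entries have all conjugates of modulus at most
  \<open>b\<close> has operator norm at most \<open>d b\<close>. An entry of \<open>A\<close> has conjugates of modulus at most
  \<open>n\<close>, so \<open>\<parallel>A\<parallel> \<le> d n\<close>. Back substitution in \<open>A B = 1\<close> bounds the conjugates of
  \<open>B\<^sub>i\<^sub>k\<close> by \<open>(n + 1)\<^sup>d\<^sup>-\<^sup>1\<^sup>-\<^sup>i\<close>, so \<open>\<parallel>A\<^sup>-\<^sup>1\<parallel> \<le> d (n + 1)\<^sup>d \<le> (2n)\<^sup>2\<^sup>d\<close>.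

  That the \<open>\<sigma>\<^sub>k\<close> are well-defined ring homomorphisms is the irreducibility of the
  cyclotomic polynomial: the minimal polynomial \<open>P\<close> of \<open>\<zeta>\<close> has integer coefficients;
  if \<open>\<rho>\<close> is a root of \<open>P\<close>, so is \<open>\<rho>\<^sup>p\<close> for every prime \<open>p\<close> not dividing \<open>f\<close>
  (Dedekind's argument modulo \<open>p\<close>); hence the roots of \<open>P\<close> are exactly the primitive
  \<open>f\<close>-th roots of unity and \<open>degree P = \<phi>(f)\<close>.\<close>

text \<open>\<open>Berlekamp_Zassenhaus\<close> brings a second constant \<open>coprime\<close> into scope.\<close>
hide_const (open) comm_monoid_mult_class.coprime

lemma zeta_power: "zeta f ^ k = cis (2 * pi * real k / real f)"
  unfolding zeta_def DeMoivre by (simp add: field_simps)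

lemma zeta_power_eq_1_iff:
  assumes "f > 0" shows "zeta f ^ k = 1 \<longleftrightarrow> f dvd k"
proof
  assume "zeta f ^ k = 1"
  then have "cos (2 * pi * real k / real f) = 1"
    by (metis one_complex.sel(1) cis.sel(1) zeta_power)
  then obtain m :: int where "2 * pi * real k / real f = real_of_int m * 2 * pi"
    using cos_one_2pi_int by auto
  then have "real k = real_of_int m * real f"
    using assms by (simp add: field_simps)
  then have "int k = m * int f"
    by (metis of_int_eq_iff of_int_mult of_int_of_nat_eq)
  then show "f dvd k"
    by (metis dvd_triv_right int_dvd_int_iff)
next
  assume "f dvd k"
  then obtain m where "k = f * m" by auto
  then have "2 * pi * real k / real f = 2 * pi * real m"
    using assms by (simp add: field_simps)
  then show "zeta f ^ k = 1"
    by (simp add: zeta_power cis_multiple_2pi)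
qed

lemma norm_zeta [simp]: "norm (zeta f) = 1"
  by (simp add: zeta_def)

lemma zeta_power_eq_iff:
  assumes "f > 0" shows "zeta f ^ a = zeta f ^ b \<longleftrightarrow> a mod f = b mod f"
proof
  assume eq: "zeta f ^ a = zeta f ^ b"
  have "zeta f ^ (a + b * (f - 1)) = zeta f ^ (b + b * (f - 1))"
    by (simp add: power_add eq)
  also have "b + b * (f - 1) = f * b"
    using assms by (cases f) (simp_all add: algebra_simps)
  finally have "[a + b * (f - 1) = b + b * (f - 1)] (mod f)"
    using assms zeta_power_eq_1_iff
    by (metis \<open>b + b * (f - 1) = f * b\<close> cong_def dvd_eq_mod_eq_0 dvd_triv_left)
  then have "[a = b] (mod f)"
    by (simp only: cong_add_rcancel_nat)
  then show "a mod f = b mod f"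
    unfolding cong_def .
next
  assume "a mod f = b mod f"
  moreover have "zeta f ^ k = zeta f ^ (k mod f)" for k
  proof -
    have "zeta f ^ k = (zeta f ^ f) ^ (k div f) * zeta f ^ (k mod f)"
      by (metis div_mult_mod_eq power_add power_mult mult.commute)
    then show ?thesis
      using zeta_power_eq_1_iff[OF assms, of f] by simp
  qed
  ultimately show "zeta f ^ a = zeta f ^ b" by metis
qed

lemma cnj_root_of_unity:
  fixes w :: complex assumes "f > 0" and "w ^ f = 1"
  shows "cnj w = w ^ (f - 1)"
proof -
  have "norm w ^ f = 1"
    using assms(2) by (metis norm_one norm_power)
  then have "norm w = 1"
    using power_eq_imp_eq_base[of "norm w" f 1] assms(1) by simp
  then have "w * cnj w = 1"
    using complex_norm_square[of w] by simp
  moreover have "w * w ^ (f - 1) = 1"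
    using assms by (cases f) simp_all
  ultimately have "w * cnj w = w * w ^ (f - 1)" and "w \<noteq> 0"
    by auto
  then show ?thesis by simp
qed

section \<open>The ring \<open>\<int>[z]\<close> and congruences modulo a prime\<close>

definition int_adjoin :: "'a::comm_ring_1 \<Rightarrow> 'a set" where
  "int_adjoin z = {poly (of_int_poly g) z | g. True}"

lemma int_adjoin_poly [intro]: "poly (of_int_poly g) z \<in> int_adjoin z"
  unfolding int_adjoin_def by blast

lemma int_adjoin_add [intro]:
  assumes "u \<in> int_adjoin z" "v \<in> int_adjoin z" shows "u + v \<in> int_adjoin z"
  using assms unfolding int_adjoin_def by (auto simp flip: poly_add of_int_poly_hom.hom_add)

lemma int_adjoin_mult [intro]:
  assumes "u \<in> int_adjoin z" "v \<in> int_adjoin z" shows "u * v \<in> int_adjoin z"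
  using assms unfolding int_adjoin_def by (auto simp flip: poly_mult of_int_poly_hom.hom_mult)

lemma int_adjoin_of_int [intro]: "of_int c \<in> int_adjoin z"
  using int_adjoin_poly[of "[:c:]" z] by (simp add: of_int_hom.map_poly_pCons_hom)

lemma int_adjoin_0 [intro]: "0 \<in> int_adjoin z"
  using int_adjoin_of_int[of 0 z] by simp

lemma int_adjoin_1 [intro]: "1 \<in> int_adjoin z"
  using int_adjoin_of_int[of 1 z] by simp

lemma int_adjoin_of_nat [intro]: "of_nat c \<in> int_adjoin z"
  using int_adjoin_of_int[of "int c" z] by simp

lemma int_adjoin_self [intro]: "z \<in> int_adjoin z"
  using int_adjoin_poly[of "[:0, 1:]" z] by (simp add: of_int_hom.map_poly_pCons_hom)

lemma int_adjoin_power [intro]: "u \<in> int_adjoin z \<Longrightarrow> u ^ k \<in> int_adjoin z"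
  by (induction k) auto

lemma int_adjoin_sum [intro]:
  "(\<And>x. x \<in> A \<Longrightarrow> h x \<in> int_adjoin z) \<Longrightarrow> sum h A \<in> int_adjoin z"
  by (induction A rule: infinite_finite_induct) auto

lemma int_adjoin_poly_in [intro]:
  assumes "u \<in> int_adjoin z" shows "poly (of_int_poly g) u \<in> int_adjoin z"
  using assms by (induction g) (auto simp: of_int_hom.map_poly_pCons_hom)

definition int_adjoin_cong :: "'a::comm_ring_1 \<Rightarrow> nat \<Rightarrow> 'a \<Rightarrow> 'a \<Rightarrow> bool" where
  "int_adjoin_cong z p u v \<longleftrightarrow> (\<exists>w\<in>int_adjoin z. u - v = of_nat p * w)"

lemma int_adjoin_cong_refl: "int_adjoin_cong z p u u"
  unfolding int_adjoin_cong_def using int_adjoin_0 by force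

lemma int_adjoin_cong_trans:
  assumes "int_adjoin_cong z p u v" "int_adjoin_cong z p v x" shows "int_adjoin_cong z p u x"
proof -
  obtain w1 w2 where "w1 \<in> int_adjoin z" "w2 \<in> int_adjoin z"
    "u - v = of_nat p * w1" "v - x = of_nat p * w2"
    using assms unfolding int_adjoin_cong_def by blast
  then have "u - x = of_nat p * (w1 + w2)" "w1 + w2 \<in> int_adjoin z"
    by (auto simp: algebra_simps)
  then show ?thesis unfolding int_adjoin_cong_def by blast
qed

lemma int_adjoin_cong_add:
  assumes "int_adjoin_cong z p u v" "int_adjoin_cong z p u' v'"
  shows "int_adjoin_cong z p (u + u') (v + v')"
proof -
  obtain w1 w2 where "w1 \<in> int_adjoin z" "w2 \<in> int_adjoin z"
    "u - v = of_nat p * w1" "u' - v' = of_nat p * w2"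
    using assms unfolding int_adjoin_cong_def by blast
  then have "(u + u') - (v + v') = of_nat p * (w1 + w2)" "w1 + w2 \<in> int_adjoin z"
    by (auto simp: algebra_simps)
  then show ?thesis unfolding int_adjoin_cong_def by blast
qed

lemma int_adjoin_cong_mult:
  assumes "int_adjoin_cong z p u v" "int_adjoin_cong z p u' v'"
    and "u \<in> int_adjoin z" "v' \<in> int_adjoin z"
  shows "int_adjoin_cong z p (u * u') (v * v')"
proof -
  obtain w1 w2 where w: "w1 \<in> int_adjoin z" "w2 \<in> int_adjoin z"
    "u - v = of_nat p * w1" "u' - v' = of_nat p * w2"
    using assms unfolding int_adjoin_cong_def by blast
  have "u * u' - v * v' = u * (u' - v') + (u - v) * v'"
    by (simp add: algebra_simps)
  also have "\<dots> = of_nat p * (u * w2 + w1 * v')"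
    using w by (simp add: algebra_simps)
  finally show ?thesis
    unfolding int_adjoin_cong_def using w assms by blast
qed

lemma int_adjoin_cong_of_int:
  assumes "[a = b] (mod int p)" shows "int_adjoin_cong z p (of_int a) (of_int b)"
proof -
  obtain c where "a - b = int p * c"
    using assms by (metis cong_iff_dvd_diff cong_sym dvdE)
  then have "of_int a - of_int b = of_nat p * of_int c"
    by (metis of_int_diff of_int_mult of_int_of_nat_eq)
  then show ?thesis unfolding int_adjoin_cong_def by blast
qed

lemma binomial_ring_prime:
  fixes a b :: "'a::comm_ring_1" assumes "prime p"
  shows "(a + b) ^ p = a ^ p + b ^ p +
    of_nat p * (\<Sum>k\<in>{1..<p}. of_nat ((p choose k) div p) * a ^ k * b ^ (p - k))"
proof -
  have p1: "p > 1" using assms prime_gt_1_nat by blast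
  have "{..p} = insert 0 (insert p {1..<p})" using p1 by auto
  then have "(a + b) ^ p = b ^ p + (a ^ p + (\<Sum>k\<in>{1..<p}. of_nat (p choose k) * a ^ k * b ^ (p - k)))"
    unfolding binomial_ring using p1 by simp
  also have "(\<Sum>k\<in>{1..<p}. of_nat (p choose k) * a ^ k * b ^ (p - k))
      = of_nat p * (\<Sum>k\<in>{1..<p}. of_nat ((p choose k) div p) * a ^ k * b ^ (p - k))"
    unfolding sum_distrib_left
  proof (rule sum.cong[OF refl])
    fix k assume "k \<in> {1..<p}"
    then have "p choose k = p * ((p choose k) div p)"
      using assms by (simp add: dvd_choose_prime)
    then show "of_nat (p choose k) * a ^ k * b ^ (p - k)
        = of_nat p * (of_nat ((p choose k) div p) * a ^ k * b ^ (p - k))"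
      by (metis mult.assoc of_nat_mult)
  qed
  finally show ?thesis by (simp add: algebra_simps)
qed

lemma int_adjoin_cong_power_add:
  assumes "prime p" "u \<in> int_adjoin z" "v \<in> int_adjoin z"
  shows "int_adjoin_cong z p ((u + v) ^ p) (u ^ p + v ^ p)"
proof -
  let ?w = "\<Sum>k\<in>{1..<p}. of_nat ((p choose k) div p) * u ^ k * v ^ (p - k)"
  have "?w \<in> int_adjoin z"
    using assms(2,3) by blast
  then show ?thesis
    unfolding int_adjoin_cong_def binomial_ring_prime[OF assms(1)] by auto
qed

lemma int_cong_power_prime:
  fixes c :: int assumes "prime p" shows "[c ^ p = c] (mod int p)"
proof -
  have p0: "p > 0" using assms by (simp add: prime_gt_0_nat)
  define b where "b = nat (c mod int p)"
  have cb: "[c = int b] (mod int p)"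
    unfolding b_def using p0 by (simp add: cong_def)
  have "[b ^ p = b] (mod p)"
  proof (cases "p dvd b")
    case True
    moreover have "p dvd b ^ p"
      using True p0 by (cases p) auto
    ultimately show ?thesis by (simp add: cong_def dvd_eq_mod_eq_0)
  next
    case False
    then have "[b ^ (p - 1) = 1] (mod p)"
      using fermat_theorem assms by blast
    then have "[b ^ (p - 1) * b = 1 * b] (mod p)"
      by (rule cong_mult) (rule cong_refl)
    moreover have "b ^ (p - 1) * b = b ^ p"
      using p0 by (cases p) simp_all
    ultimately show ?thesis by simp
  qed
  then have "[int b ^ p = int b] (mod int p)"
    using cong_int_iff[of "b ^ p" b p] by simp
  moreover have "[c ^ p = int b ^ p] (mod int p)"
    using cb by (rule cong_pow)
  ultimately show ?thesis
    using cong_trans cong_sym[OF cb] by blast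
qed

lemma int_adjoin_cong_poly_power:
  assumes "prime p" "z' \<in> int_adjoin z"
  shows "int_adjoin_cong z p (poly (of_int_poly g) z' ^ p) (poly (of_int_poly g) (z' ^ p))"
proof (induction g)
  case 0
  then show ?case
    using assms(1) by (simp add: zero_power prime_gt_0_nat int_adjoin_cong_refl)
next
  case (pCons a g)
  let ?y = "poly (of_int_poly g) z'" and ?y' = "poly (of_int_poly g) (z' ^ p)"
  have "int_adjoin_cong z p ((of_int a + z' * ?y) ^ p) (of_int a ^ p + (z' * ?y) ^ p)"
    using assms by (intro int_adjoin_cong_power_add) auto
  moreover have "int_adjoin_cong z p (of_int a ^ p) (of_int a)"
    using int_adjoin_cong_of_int[OF int_cong_power_prime[OF assms(1)]] by simp
  moreover have "int_adjoin_cong z p ((z' * ?y) ^ p) (z' ^ p * ?y')"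
    unfolding power_mult_distrib using assms(2)
    by (intro int_adjoin_cong_mult[OF int_adjoin_cong_refl pCons.IH]) auto
  ultimately have "int_adjoin_cong z p ((of_int a + z' * ?y) ^ p) (of_int a + z' ^ p * ?y')"
    by (blast intro: int_adjoin_cong_trans int_adjoin_cong_add)
  then show ?case
    by (simp add: of_int_hom.map_poly_pCons_hom)
qed

lemma monic_division:
  fixes P g :: "'a::comm_ring_1 poly" assumes "monic P"
  obtains Q r where "g = P * Q + r" "r = 0 \<or> degree r < degree P"
proof -
  obtain Q r where qr: "pseudo_divmod g P = (Q, r)" by force
  have "P \<noteq> 0" using assms by auto
  from pseudo_divmod[OF this qr] assms show ?thesis by (intro that) auto
qed

lemma dvd_of_int_poly_dvd_monic:
  fixes g h :: "int poly"
  assumes "monic g" and dvd: "(of_int_poly g :: rat poly) dvd of_int_poly h"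
  shows "g dvd h"
proof -
  obtain Q r where h: "h = g * Q + r" and r: "r = 0 \<or> degree r < degree g"
    using monic_division[OF assms(1)] .
  have r_dvd: "(of_int_poly g :: rat poly) dvd of_int_poly r"
    using dvd unfolding h by (simp add: of_int_poly_hom.hom_add of_int_poly_hom.hom_mult dvd_add_right_iff)
  have "r = 0"
  proof (rule ccontr)
    assume "r \<noteq> 0"
    then have "degree g \<le> degree r"
      using dvd_imp_degree_le[OF r_dvd] by (simp add: of_int_hom.degree_map_poly_hom)
    with r \<open>r \<noteq> 0\<close> show False by simp
  qed
  then show ?thesis using h by simp
qed

text \<open>Divide \<open>g\<close> by \<open>P\<close>: then \<open>P\<close> divides \<open>q r - c\<close>, which has smaller degree, so \<open>q r = c\<close>.\<close>
lemma monic_dvd_smult_diff_const_imp_dvd: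
  fixes P g :: "int poly"
  assumes "monic P" "degree P > 0" "P dvd smult q g - [:c:]"
  shows "q dvd c"
proof -
  obtain Q r where g: "g = P * Q + r" and r: "r = 0 \<or> degree r < degree P"
    using monic_division[OF assms(1)] .
  have "smult q g - [:c:] = P * smult q Q + (smult q r - [:c:])"
    unfolding g by (simp add: smult_add_right algebra_simps)
  then have "P dvd smult q r - [:c:]"
    using assms(3) by (metis dvd_add_right_iff dvd_triv_left)
  moreover have "degree (smult q r - [:c:]) < degree P"
    using r assms(2) by (auto intro: le_less_trans[OF degree_diff_le_max] simp: degree_smult_le)
  ultimately have "smult q r - [:c:] = 0"
    using dvd_imp_degree_le not_le by blast
  then have "c = q * coeff r 0"
    by (metis coeff_diff coeff_pCons_0 coeff_smult eq_iff_diff_eq_0)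
  then show ?thesis by simp
qed

lemma monic_factor_of_monic_int_poly:
  fixes X :: "int poly" and P H :: "rat poly"
  assumes "monic X" "of_int_poly X = P * H" "monic P"
  shows "\<exists>g. P = of_int_poly g"
proof -
  obtain r g where rg: "rat_to_normalized_int_poly P = (r, g)" by force
  from rat_to_int_factor_explicit[OF assms(2) rg] obtain h where X: "X = g * smult (content X) h"
    by auto
  from rat_to_normalized_int_poly[OF rg] have P: "P = smult r (of_int_poly g)" and "r > 0"
    by auto
  have "lead_coeff X = lead_coeff g * (content X * lead_coeff h)"
    using arg_cong[OF X, of lead_coeff] by (simp only: lead_coeff_mult lead_coeff_smult)
  then have "lead_coeff g * (content X * lead_coeff h) = 1"
    using assms(1) by simp
  then have "lead_coeff g = 1 \<or> lead_coeff g = -1"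
    unfolding zmult_eq_1_iff by blast
  moreover have "1 = r * of_int (lead_coeff g)"
    using assms(3) P \<open>r > 0\<close> by simp
  ultimately have "r = 1"
    using \<open>r > 0\<close> by auto
  with P show ?thesis by auto
qed

section \<open>Minimal polynomials of algebraic integers\<close>

abbreviation of_rat_poly :: "rat poly \<Rightarrow> 'a::field_char_0 poly" where
  "of_rat_poly \<equiv> map_poly of_rat"

interpretation of_rat_poly_hom: map_poly_inj_idom_hom "of_rat :: rat \<Rightarrow> 'a::field_char_0" ..

lemma of_rat_poly_of_int_poly [simp]: "of_rat_poly (of_int_poly g) = of_int_poly g"
  by (rule poly_eqI) (simp add: coeff_map_poly)

lemma poly_mod_root:
  fixes x :: "'a::field_char_0"
  assumes "poly (of_rat_poly P) x = 0"
  shows "poly (of_rat_poly (R mod P)) x = poly (of_rat_poly R) x"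
proof -
  have "of_rat_poly R = of_rat_poly (R div P) * of_rat_poly P + (of_rat_poly (R mod P) :: 'a poly)"
    by (metis div_mult_mod_eq of_rat_poly_hom.hom_add of_rat_poly_hom.hom_mult)
  then show ?thesis
    using assms by (metis add_0 mult_zero_right poly_add poly_mult)
qed

definition min_poly_rat :: "'a::field_char_0 \<Rightarrow> rat poly" where
  "min_poly_rat \<alpha> = (SOME P. monic P \<and> poly (of_rat_poly P) \<alpha> = 0
      \<and> (\<forall>R. poly (of_rat_poly R) \<alpha> = 0 \<longrightarrow> P dvd R))"

definition min_poly_int :: "'a::field_char_0 \<Rightarrow> int poly" where
  "min_poly_int \<alpha> = (SOME g. of_int_poly g = min_poly_rat \<alpha>)"

locale monic_int_root =
  fixes \<alpha> :: "'a::field_char_0" and X :: "int poly"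
  assumes monic_X: "monic X" and root_X: "poly (of_int_poly X) \<alpha> = 0"
begin

lemma min_poly_rat_exists:
  "\<exists>P. monic P \<and> poly (of_rat_poly P) \<alpha> = 0 \<and> (\<forall>R. poly (of_rat_poly R) \<alpha> = 0 \<longrightarrow> P dvd R)"
proof -
  define Q where "Q R \<longleftrightarrow> R \<noteq> 0 \<and> poly (of_rat_poly R) \<alpha> = 0" for R
  have "lead_coeff (of_int_poly X :: rat poly) = 1"
    using monic_X by simp
  then have "Q (of_int_poly X)"
    unfolding Q_def using root_X by auto
  then obtain R0 where R0: "Q R0" and least: "\<And>R. Q R \<Longrightarrow> degree R0 \<le> degree R"
    using ex_has_least_nat[of Q _ degree] by blast
  define P where "P = smult (inverse (lead_coeff R0)) R0"
  have "lead_coeff R0 \<noteq> 0"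
    using R0 unfolding Q_def by simp
  then have monic: "monic P" and deg: "degree P = degree R0"
    unfolding P_def by (simp_all add: lead_coeff_smult)
  have root: "poly (of_rat_poly P) \<alpha> = 0"
    using R0 unfolding P_def Q_def by (simp add: of_rat_hom.map_poly_hom_smult)
  have "P dvd R" if R: "poly (of_rat_poly R) \<alpha> = 0" for R
  proof -
    have "poly (of_rat_poly (R mod P)) \<alpha> = 0"
      using R poly_mod_root[OF root] by simp
    have "R mod P = 0"
    proof (rule ccontr)
      assume "R mod P \<noteq> 0"
      then have "degree R0 \<le> degree (R mod P)"
        using least \<open>poly (of_rat_poly (R mod P)) \<alpha> = 0\<close> unfolding Q_def by blast
      moreover have "P \<noteq> 0" using monic by auto
      ultimately show False
        using degree_mod_less[OF \<open>P \<noteq> 0\<close>, of R] \<open>R mod P \<noteq> 0\<close> deg by simp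
    qed
    then show ?thesis by (simp add: mod_eq_0_iff_dvd)
  qed
  with monic root show ?thesis by blast
qed

lemma min_poly_rat_spec:
  "monic (min_poly_rat \<alpha>) \<and> poly (of_rat_poly (min_poly_rat \<alpha>)) \<alpha> = 0
    \<and> (\<forall>R. poly (of_rat_poly R) \<alpha> = 0 \<longrightarrow> min_poly_rat \<alpha> dvd R)"
  unfolding min_poly_rat_def by (rule someI_ex[OF min_poly_rat_exists])

lemma min_poly_rat_monic: "monic (min_poly_rat \<alpha>)"
  using min_poly_rat_spec by blast

lemma min_poly_rat_root: "poly (of_rat_poly (min_poly_rat \<alpha>)) \<alpha> = 0"
  using min_poly_rat_spec by blast

lemma min_poly_rat_dvd: "poly (of_rat_poly R) \<alpha> = 0 \<Longrightarrow> min_poly_rat \<alpha> dvd R"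
  using min_poly_rat_spec by blast

lemma of_int_min_poly_int: "of_int_poly (min_poly_int \<alpha>) = min_poly_rat \<alpha>"
proof -
  have "min_poly_rat \<alpha> dvd of_int_poly X"
    using root_X by (intro min_poly_rat_dvd) simp
  then obtain H where "of_int_poly X = min_poly_rat \<alpha> * H"
    by (elim dvdE)
  then obtain g where "min_poly_rat \<alpha> = of_int_poly g"
    using monic_factor_of_monic_int_poly[OF monic_X _ min_poly_rat_monic] by blast
  then have "of_int_poly g = min_poly_rat \<alpha>" ..
  then show ?thesis
    unfolding min_poly_int_def by (rule someI)
qed

lemma min_poly_int_monic: "monic (min_poly_int \<alpha>)"
  using arg_cong[OF of_int_min_poly_int, of lead_coeff] min_poly_rat_monic by simp

lemma min_poly_int_root: "poly (of_int_poly (min_poly_int \<alpha>)) \<alpha> = 0"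
  using min_poly_rat_root by (simp flip: of_int_min_poly_int)

lemma min_poly_int_dvd:
  assumes "poly (of_int_poly g) \<alpha> = 0" shows "min_poly_int \<alpha> dvd g"
  using min_poly_rat_dvd[of "of_int_poly g"] assms
  by (intro dvd_of_int_poly_dvd_monic[OF min_poly_int_monic]) (simp add: of_int_min_poly_int)

lemma degree_min_poly_int_pos: "degree (min_poly_int \<alpha>) > 0"
proof (rule ccontr)
  assume "\<not> degree (min_poly_int \<alpha>) > 0"
  then have "min_poly_int \<alpha> = 1"
    using min_poly_int_monic monic_degree_0 by blast
  then show False
    using min_poly_int_root by simp
qed

text \<open>\<open>\<int>[\<alpha>] \<inter> \<rat> = \<int>\<close>, in divisibility form.\<close>
lemma dvd_of_int_eq_mult_int_adjoin:
  assumes "of_int c = of_int q * w" "w \<in> int_adjoin \<alpha>"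
  shows "q dvd c"
proof -
  obtain g where "w = poly (of_int_poly g) \<alpha>"
    using assms(2) unfolding int_adjoin_def by blast
  then have "poly (of_int_poly (smult q g - [:c:])) \<alpha> = 0"
    using assms(1) by (simp add: of_int_poly_hom.hom_minus of_int_hom.map_poly_pCons_hom
        of_int_hom.map_poly_hom_smult)
  then show ?thesis
    using monic_dvd_smult_diff_const_imp_dvd[OF min_poly_int_monic degree_min_poly_int_pos]
      min_poly_int_dvd by blast
qed

lemma min_poly_rat_common_root:
  assumes "poly (of_rat_poly (min_poly_rat \<alpha>)) \<beta> = 0" "poly (of_rat_poly R) \<beta> = 0"
  shows "poly (of_rat_poly R) \<alpha> = 0"
proof (cases "R = 0")
  case False
  define P where "P = min_poly_rat \<alpha>"
  define G where "G = gcd P R"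
  have "G = fst (bezout_coefficients P R) * P + snd (bezout_coefficients P R) * R"
    unfolding G_def by (rule bezout_coefficients_fst_snd[symmetric])
  then have G\<beta>: "poly (of_rat_poly G) \<beta> = 0"
    using assms unfolding P_def by (simp add: of_rat_poly_hom.hom_add of_rat_poly_hom.hom_mult)
  have "G \<noteq> 0" unfolding G_def using False by simp
  obtain T where PT: "P = G * T"
    unfolding G_def by (metis dvdE gcd_dvd1)
  have "degree G > 0"
  proof (rule ccontr)
    assume "\<not> degree G > 0"
    then obtain a where "G = [:a:]" by (metis degree_eq_zeroE neq0_conv)
    then show False
      using G\<beta> \<open>G \<noteq> 0\<close> by (simp add: of_rat_hom.map_poly_pCons_hom)
  qed
  have "P \<noteq> 0" unfolding P_def using min_poly_rat_monic by auto
  then have "T \<noteq> 0" using PT by auto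
  have "poly (of_rat_poly G) \<alpha> * poly (of_rat_poly T) \<alpha> = 0"
    using min_poly_rat_root unfolding P_def[symmetric] PT by (simp add: of_rat_poly_hom.hom_mult)
  moreover have "poly (of_rat_poly T) \<alpha> \<noteq> 0"
  proof
    assume "poly (of_rat_poly T) \<alpha> = 0"
    then have "P dvd T" unfolding P_def by (rule min_poly_rat_dvd)
    then have "degree P \<le> degree T"
      using \<open>T \<noteq> 0\<close> by (rule dvd_imp_degree_le)
    moreover have "degree P = degree G + degree T"
      unfolding PT using \<open>G \<noteq> 0\<close> \<open>T \<noteq> 0\<close> by (rule degree_mult_eq)
    ultimately show False using \<open>degree G > 0\<close> by simp
  qed
  ultimately have "poly (of_rat_poly G) \<alpha> = 0" by simp
  moreover obtain S where "R = G * S"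
    unfolding G_def by (metis dvdE gcd_dvd2)
  ultimately show ?thesis
    by (simp add: of_rat_poly_hom.hom_mult)
qed simp

end

section \<open>Irreducibility of the cyclotomic polynomial\<close>

definition root_unity_poly :: "nat \<Rightarrow> int poly" where
  "root_unity_poly f = monom 1 f - 1"

lemma of_int_root_unity_poly:
  "(of_int_poly (root_unity_poly f) :: 'a::{comm_ring_1,ring_char_0} poly) = monom 1 f - 1"
  by (simp add: root_unity_poly_def of_int_poly_hom.hom_minus of_int_hom.map_poly_hom_monom)

lemma poly_root_unity_poly [simp]:
  "poly (of_int_poly (root_unity_poly f)) (z :: 'a::{comm_ring_1,ring_char_0}) = z ^ f - 1"
  by (simp add: of_int_root_unity_poly poly_monom)

lemma monic_root_unity_poly:
  assumes "f > 0" shows "monic (root_unity_poly f)" "degree (root_unity_poly f) = f"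
proof -
  have "degree (root_unity_poly f) \<le> f"
    unfolding root_unity_poly_def
    by (rule order_trans[OF degree_diff_le_max]) (simp add: degree_monom_le)
  moreover have "coeff (root_unity_poly f) f = 1"
    using assms by (simp add: root_unity_poly_def)
  ultimately have "degree (root_unity_poly f) = f"
    by (metis le_antisym le_degree zero_neq_one)
  with \<open>coeff (root_unity_poly f) f = 1\<close> show "monic (root_unity_poly f)" "degree (root_unity_poly f) = f" by simp_all
qed

lemma monic_int_root_zeta:
  assumes "f > 0" shows "monic_int_root (zeta f) (root_unity_poly f)"
proof
  show "monic (root_unity_poly f)"
    by (rule monic_root_unity_poly(1)[OF assms])
  show "poly (of_int_poly (root_unity_poly f)) (zeta f) = 0"
    using zeta_power_eq_1_iff[OF assms, of f] by simp
qed

lemma min_poly_zeta_dvd_root_unity_poly: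
  assumes "f > 0" shows "min_poly_int (zeta f) dvd root_unity_poly f"
  using monic_int_root.min_poly_int_dvd[OF monic_int_root_zeta[OF assms]]
    monic_int_root.root_X[OF monic_int_root_zeta[OF assms]] .

lemma zeta_power_root_of_unity:
  assumes "f > 0" shows "(zeta f ^ j) ^ f = 1"
proof -
  have "(zeta f ^ j) ^ f = (zeta f ^ f) ^ j"
    by (simp flip: power_mult add: mult.commute)
  then show ?thesis
    using zeta_power_eq_1_iff[OF assms, of f] by simp
qed

lemma inj_on_zeta_power_lessThan:
  assumes "f > 0" shows "inj_on (\<lambda>j. zeta f ^ j) {..<f}"
  using assms by (auto intro!: inj_onI simp: zeta_power_eq_iff)

lemma roots_of_unity_eq_zeta_powers:
  assumes "f > 0" shows "{z. z ^ f = 1} = (\<lambda>j. zeta f ^ j) ` {..<f}"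
proof -
  note inj = inj_on_zeta_power_lessThan[OF assms]
  have sub: "(\<lambda>j. zeta f ^ j) ` {..<f} \<subseteq> {z. z ^ f = 1}"
    using zeta_power_root_of_unity[OF assms] by auto
  let ?X = "of_int_poly (root_unity_poly f) :: complex poly"
  have "?X \<noteq> 0" "degree ?X = f"
    using monic_root_unity_poly[OF assms] by (auto simp: of_int_hom.degree_map_poly_hom)
  then have "finite {z. z ^ f = (1::complex)}" "card {z. z ^ f = (1::complex)} \<le> f"
    using poly_roots_finite[of ?X] card_poly_roots_bound[of ?X] by simp_all
  then show ?thesis
    using card_subset_eq[OF _ sub] card_image[OF inj] card_mono[OF _ sub] by simp
qed

lemma pderiv_factor_root_unity:
  fixes P H :: "complex poly"
  assumes "P * H = monom 1 f - 1" "poly P \<rho> = 0" "\<rho> ^ f = 1" "f > 0"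
  shows "poly H \<rho> * (\<rho> * poly (pderiv P) \<rho>) = of_nat f"
proof -
  have "pderiv (P * H) = monom (of_nat f) (f - 1)"
    unfolding assms(1) by (simp add: pderiv_diff pderiv_monom)
  then have "of_nat f * \<rho> ^ (f - 1) = poly (pderiv (P * H)) \<rho>"
    by (simp add: poly_monom)
  also have "\<dots> = poly H \<rho> * poly (pderiv P) \<rho>"
    using assms(2) by (simp add: pderiv_mult)
  finally have "of_nat f * \<rho> ^ (f - 1) = poly H \<rho> * poly (pderiv P) \<rho>" .
  then have "poly H \<rho> * (\<rho> * poly (pderiv P) \<rho>) = of_nat f * \<rho> ^ Suc (f - 1)"
    by (simp add: algebra_simps)
  then show ?thesis
    using assms(3,4) by simp
qed

text \<open>If \<open>\<rho>\<^sup>p\<close> is no root of \<open>P\<close>, it is a root of the cofactor \<open>H\<close> of \<open>P\<close> in \<open>x\<^sup>f - 1\<close>.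
  Then \<open>H(\<rho>)\<^sup>p \<equiv> H(\<rho>\<^sup>p) = 0\<close> modulo \<open>p\<close>, while \<open>H(\<rho>)\<close> divides \<open>f\<close> in \<open>\<int>[\<zeta>]\<close> by
  \<open>pderiv_factor_root_unity\<close>; hence \<open>p\<close> divides \<open>f\<^sup>p\<close>.\<close>
lemma min_poly_zeta_root_power_prime:
  assumes f: "f > 0" and p: "prime p" "\<not> p dvd f"
    and \<rho>: "\<rho> \<in> int_adjoin (zeta f)" "\<rho> ^ f = 1"
    and root: "poly (of_int_poly (min_poly_int (zeta f))) \<rho> = 0"
  shows "poly (of_int_poly (min_poly_int (zeta f))) (\<rho> ^ p) = 0"
proof (rule ccontr)
  interpret monic_int_root "zeta f" "root_unity_poly f"
    by (rule monic_int_root_zeta[OF f])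
  let ?P = "min_poly_int (zeta f)"
  assume nonroot: "poly (of_int_poly ?P) (\<rho> ^ p) \<noteq> 0"
  obtain H where PH: "root_unity_poly f = ?P * H"
    using min_poly_zeta_dvd_root_unity_poly[OF f] by (elim dvdE)
  then have PH': "of_int_poly ?P * of_int_poly H = monom (1::complex) f - 1"
    by (simp flip: of_int_root_unity_poly add: of_int_poly_hom.hom_mult)
  define u where "u = \<rho> * poly (of_int_poly (pderiv ?P)) \<rho>"
  have u: "u \<in> int_adjoin (zeta f)"
    unfolding u_def using \<rho>(1) by blast
  have Hu: "poly (of_int_poly H) \<rho> * u = of_nat f"
    unfolding u_def of_int_hom.map_poly_pderiv
    using pderiv_factor_root_unity[OF PH' root \<rho>(2) f] .
  have "poly (of_int_poly (root_unity_poly f)) (\<rho> ^ p) = 0"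
  proof -
    have "(\<rho> ^ p) ^ f = (\<rho> ^ f) ^ p"
      by (simp flip: power_mult add: mult.commute)
    then show ?thesis using \<rho>(2) by simp
  qed
  then have "poly (of_int_poly H) (\<rho> ^ p) = 0"
    using nonroot unfolding PH by (simp add: of_int_poly_hom.hom_mult)
  then obtain w where w: "w \<in> int_adjoin (zeta f)" "poly (of_int_poly H) \<rho> ^ p = of_nat p * w"
    using int_adjoin_cong_poly_power[OF p(1) \<rho>(1), of H] unfolding int_adjoin_cong_def by auto
  have "(of_nat f :: complex) ^ p = (poly (of_int_poly H) \<rho> * u) ^ p"
    by (simp add: Hu)
  also have "\<dots> = of_nat p * (w * u ^ p)"
    by (simp add: power_mult_distrib w(2))
  finally have "of_int (int f ^ p) = (of_int (int p) :: complex) * (w * u ^ p)"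
    by simp
  moreover have "w * u ^ p \<in> int_adjoin (zeta f)"
    using w(1) u by blast
  ultimately have "int p dvd int f ^ p"
    by (rule dvd_of_int_eq_mult_int_adjoin)
  then have "p dvd f ^ p"
    using int_dvd_int_iff[of p "f ^ p"] by simp
  then show False
    using p prime_dvd_power by blast
qed

lemma min_poly_zeta_root_coprime:
  assumes f: "f > 0"
  shows "k > 0 \<Longrightarrow> coprime k f \<Longrightarrow> poly (of_int_poly (min_poly_int (zeta f))) (zeta f ^ k) = 0"
proof (induction k rule: less_induct)
  case (less k)
  interpret monic_int_root "zeta f" "root_unity_poly f"
    by (rule monic_int_root_zeta[OF f])
  show ?case
  proof (cases "k = 1")
    case True
    then show ?thesis using min_poly_int_root by simp
  next
    case False
    obtain p k' where p: "prime p" "k = p * k'"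
      using prime_factor_nat[OF False] by (metis dvdE)
    have "k' > 0"
      using less.prems(1) p(2) by simp
    moreover have "k' < k"
      using mult_strict_right_mono[OF prime_gt_1_nat[OF p(1)] \<open>k' > 0\<close>] p(2) by simp
    moreover have "coprime k' f"
      using less.prems(2) p(2) by simp
    ultimately have IH: "poly (of_int_poly (min_poly_int (zeta f))) (zeta f ^ k') = 0"
      using less.IH by blast
    have "\<not> p dvd f"
    proof
      assume "p dvd f"
      then have "p = 1"
        using coprime_common_divisor_nat[OF less.prems(2), of p] p(2) by simp
      with p(1) show False by simp
    qed
    then have "poly (of_int_poly (min_poly_int (zeta f))) ((zeta f ^ k') ^ p) = 0"
      using min_poly_zeta_root_power_prime[OF f p(1) _ _ zeta_power_root_of_unity[OF f] IH] by blast
    then show ?thesis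
      using p(2) by (simp add: power_mult mult.commute)
  qed
qed

lemma min_poly_zeta_nonroot:
  assumes f: "f > 0" and "\<not> coprime j f"
  shows "poly (of_int_poly (min_poly_int (zeta f))) (zeta f ^ j) \<noteq> 0"
proof
  interpret monic_int_root "zeta f" "root_unity_poly f"
    by (rule monic_int_root_zeta[OF f])
  assume root: "poly (of_int_poly (min_poly_int (zeta f))) (zeta f ^ j) = 0"
  define g where "g = gcd j f"
  define d where "d = f div g"
  have "g \<noteq> 1"
  proof
    assume "g = 1"
    then have "coprime j f"
      unfolding g_def by (simp only: coprime_iff_gcd_eq_1)
    with assms(2) show False by contradiction
  qed
  moreover have "g > 0"
    using f unfolding g_def by simp
  ultimately have "g > 1" by simp
  have "f = g * d"
    unfolding d_def g_def by simp
  moreover have "d < f"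
    unfolding d_def using div_less_dividend[OF \<open>g > 1\<close> f] .
  moreover have "0 < d"
    using f \<open>f = g * d\<close> by (cases d) auto
  ultimately have fd: "f = g * d" "0 < d" "d < f" by blast+
  have "(zeta f ^ j) ^ d = 1"
  proof -
    obtain j' where "j = g * j'" unfolding g_def by (metis dvdE gcd_dvd1)
    then have "j * d = f * j'" using fd(1) by simp
    then show ?thesis
      using f by (simp flip: power_mult add: zeta_power_eq_1_iff)
  qed
  then have "poly (of_rat_poly (of_int_poly (root_unity_poly d))) (zeta f ^ j) = 0"
    by simp
  moreover have "poly (of_rat_poly (min_poly_rat (zeta f))) (zeta f ^ j) = 0"
    using root by (simp flip: of_int_min_poly_int)
  ultimately have "poly (of_rat_poly (of_int_poly (root_unity_poly d))) (zeta f) = 0"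
    by (intro min_poly_rat_common_root[of "zeta f ^ j"])
  then have "f dvd d"
    using f by (simp add: zeta_power_eq_1_iff)
  then show False
    using fd by (simp add: nat_dvd_not_less)
qed

lemma roots_min_poly_zeta:
  assumes f: "f > 0"
  shows "{z :: complex. poly (of_int_poly (min_poly_int (zeta f))) z = 0} = (\<lambda>k. zeta f ^ k) ` totatives f"
proof (intro equalityI subsetI)
  fix z :: complex assume z: "z \<in> {z. poly (of_int_poly (min_poly_int (zeta f))) z = 0}"
  obtain H where "root_unity_poly f = min_poly_int (zeta f) * H"
    using min_poly_zeta_dvd_root_unity_poly[OF f] by (elim dvdE)
  then have "z ^ f = 1"
    using z poly_root_unity_poly[of f z] by (simp add: of_int_poly_hom.hom_mult)
  then obtain j where j: "j < f" "z = zeta f ^ j"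
    using roots_of_unity_eq_zeta_powers[OF f] by auto
  then have "coprime j f"
    using min_poly_zeta_nonroot[OF f] z by blast
  define k where "k = (if j = 0 then f else j)"
  have "k \<in> totatives f"
    using \<open>coprime j f\<close> j f unfolding k_def totatives_def by auto
  moreover have "z = zeta f ^ k"
    using j f unfolding k_def by (simp add: zeta_power_eq_1_iff)
  ultimately show "z \<in> (\<lambda>k. zeta f ^ k) ` totatives f" by blast
next
  fix z assume "z \<in> (\<lambda>k. zeta f ^ k) ` totatives f"
  then obtain k where "k \<in> totatives f" "z = zeta f ^ k" by blast
  then show "z \<in> {z. poly (of_int_poly (min_poly_int (zeta f))) z = 0}"
    using min_poly_zeta_root_coprime[OF f, of k] by (simp add: totatives_def)
qed

lemma inj_on_zeta_power_totatives:
  assumes f: "f > 0" shows "inj_on (\<lambda>k. zeta f ^ k) (totatives f)"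
proof
  fix a b assume a: "a \<in> totatives f" and b: "b \<in> totatives f" and "zeta f ^ a = zeta f ^ b"
  then have mod_eq: "a mod f = b mod f"
    using zeta_power_eq_iff[OF f, of a b] by simp
  have mod_totative: "x mod f = (if x = f then 0 else x)" if "x \<in> totatives f" for x
  proof (cases "x = f")
    case False
    then have "x < f" using that by (simp add: totatives_def)
    then show ?thesis by simp
  qed simp
  show "a = b"
    using mod_eq mod_totative[OF a] mod_totative[OF b] a b
    by (auto simp: totatives_def split: if_splits)
qed

text \<open>Counting roots in \<open>x\<^sup>f - 1 = P H\<close>: \<open>x\<^sup>f - 1\<close> has \<open>f\<close> distinct roots, so \<open>P\<close> has
  \<open>degree P\<close> distinct roots, namely the primitive \<open>f\<close>-th roots of unity.\<close>
lemma degree_min_poly_zeta: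
  assumes f: "f > 0" shows "degree (min_poly_int (zeta f)) = totient f"
proof -
  let ?P = "min_poly_int (zeta f)"
  let ?roots = "\<lambda>g :: int poly. {z :: complex. poly (of_int_poly g) z = 0}"
  obtain H where XH: "root_unity_poly f = ?P * H"
    using min_poly_zeta_dvd_root_unity_poly[OF f] by (elim dvdE)
  have "root_unity_poly f \<noteq> 0"
    using monic_root_unity_poly[OF f] by auto
  then have nz: "of_int_poly ?P \<noteq> (0 :: complex poly)" "of_int_poly H \<noteq> (0 :: complex poly)"
    unfolding XH by auto
  have "f = card (?roots (root_unity_poly f))"
    using roots_of_unity_eq_zeta_powers[OF f] card_image[OF inj_on_zeta_power_lessThan[OF f]]
    by simp
  also have "?roots (root_unity_poly f) = ?roots ?P \<union> ?roots H"
    unfolding XH by (auto simp: of_int_poly_hom.hom_mult)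
  also have "card \<dots> \<le> card (?roots ?P) + card (?roots H)"
    by (rule card_Un_le)
  finally have "f \<le> card (?roots ?P) + card (?roots H)" .
  moreover have "card (?roots ?P) \<le> degree ?P" "card (?roots H) \<le> degree H"
    using card_poly_roots_bound[OF nz(1)] card_poly_roots_bound[OF nz(2)]
    by (simp_all add: of_int_hom.degree_map_poly_hom)
  moreover have "degree ?P + degree H = f"
    using monic_root_unity_poly(2)[OF f] nz unfolding XH by (simp add: degree_mult_eq)
  ultimately have "degree ?P = card (?roots ?P)" by linarith
  then show ?thesis
    unfolding roots_min_poly_zeta[OF f] card_image[OF inj_on_zeta_power_totatives[OF f]] totient_def .
qed

section \<open>The field \<open>\<rat>(\<zeta>)\<close> and its embeddings\<close>

lemma poly_eq_sum_lessThan: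
  fixes p :: "'a::comm_semiring_1 poly"
  assumes "degree p < n" shows "poly p x = (\<Sum>j<n. coeff p j * x ^ j)"
proof -
  have "poly p x = (\<Sum>i\<le>degree p. coeff p i * x ^ i)"
    by (rule poly_altdef)
  also have "\<dots> = (\<Sum>j<n. coeff p j * x ^ j)"
    using assms by (intro sum.mono_neutral_left) (auto simp: coeff_eq_0)
  finally show ?thesis .
qed

lemma degree_min_poly_rat_zeta:
  assumes "f > 0" shows "degree (min_poly_rat (zeta f)) = totient f"
  using degree_min_poly_zeta[OF assms] monic_int_root.of_int_min_poly_int[OF monic_int_root_zeta[OF assms]]
  by (metis of_int_hom.degree_map_poly_hom)

lemma degree_mod_min_poly_rat_zeta:
  assumes f: "f > 0" shows "degree (R mod min_poly_rat (zeta f)) < totient f"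
proof (cases "R mod min_poly_rat (zeta f) = 0")
  case False
  have "min_poly_rat (zeta f) \<noteq> 0"
    using monic_int_root.min_poly_rat_monic[OF monic_int_root_zeta[OF f]] by auto
  then show ?thesis
    using degree_mod_less[of "min_poly_rat (zeta f)" R] False degree_min_poly_rat_zeta[OF f] by simp
qed (use f in simp)

definition powbasis_poly :: "nat \<Rightarrow> (nat \<Rightarrow> rat) \<Rightarrow> rat poly" where
  "powbasis_poly f c = (\<Sum>j<totient f. monom (c j) j)"

lemma poly_powbasis_poly:
  "poly (of_rat_poly (powbasis_poly f c)) x = (\<Sum>j<totient f. of_rat (c j) * x ^ j)"
  unfolding powbasis_poly_def
  by (simp add: of_rat_poly_hom.hom_sum of_rat_hom.map_poly_hom_monom poly_sum poly_monom)

lemma powbasis_comb_eq_poly: "powbasis_comb f c = poly (of_rat_poly (powbasis_poly f c)) (zeta f)"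
  unfolding powbasis_comb_def poly_powbasis_poly ..

lemma coeff_powbasis_poly: "coeff (powbasis_poly f c) j = (if j < totient f then c j else 0)"
  unfolding powbasis_poly_def by (simp add: coeff_sum coeff_monom)

lemma degree_powbasis_poly_less:
  assumes "f > 0" shows "degree (powbasis_poly f c) < totient f"
proof -
  have "degree (powbasis_poly f c) \<le> totient f - 1"
    by (rule degree_le) (auto simp: coeff_powbasis_poly)
  moreover have "totient f > 0"
    using assms by simp
  ultimately show ?thesis by linarith
qed

text \<open>Linear independence of the power basis: a vanishing combination is a rational polynomial
  with root \<open>\<zeta>\<close> of degree below \<open>\<phi>(f)\<close>, the degree of the minimal polynomial.\<close>
lemma powbasis_comb_eq_0_imp:
  assumes f: "f > 0" and "powbasis_comb f c = 0" and "j < totient f"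
  shows "c j = 0"
proof -
  have "min_poly_rat (zeta f) dvd powbasis_poly f c"
    using assms(2) unfolding powbasis_comb_eq_poly
    by (rule monic_int_root.min_poly_rat_dvd[OF monic_int_root_zeta[OF f]])
  have "powbasis_poly f c = 0"
  proof (rule ccontr)
    assume "powbasis_poly f c \<noteq> 0"
    with \<open>min_poly_rat (zeta f) dvd powbasis_poly f c\<close>
    have "degree (min_poly_rat (zeta f)) \<le> degree (powbasis_poly f c)"
      by (rule dvd_imp_degree_le)
    with degree_powbasis_poly_less[OF f, of c] degree_min_poly_rat_zeta[OF f] show False
      by simp
  qed
  then show ?thesis
    using coeff_powbasis_poly[of f c j] assms(3) by simp
qed

lemma coords_powbasis_comb:
  assumes f: "f > 0"
  shows "coords f (powbasis_comb f c) = (\<lambda>j. if j < totient f then c j else 0)"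
  unfolding coords_def
proof (rule the_equality)
  show "(\<forall>j. totient f \<le> j \<longrightarrow> (if j < totient f then c j else 0) = 0) \<and>
      powbasis_comb f c = powbasis_comb f (\<lambda>j. if j < totient f then c j else 0)"
    unfolding powbasis_comb_def by (auto intro: sum.cong)
next
  fix c' assume c': "(\<forall>j. totient f \<le> j \<longrightarrow> c' j = 0) \<and> powbasis_comb f c = powbasis_comb f c'"
  have "powbasis_comb f (\<lambda>j. c j - c' j) = 0"
    using c' unfolding powbasis_comb_def by (simp add: of_rat_diff algebra_simps sum_subtractf)
  show "c' = (\<lambda>j. if j < totient f then c j else 0)"
  proof
    fix j
    show "c' j = (if j < totient f then c j else 0)"
      using powbasis_comb_eq_0_imp[OF f \<open>powbasis_comb f (\<lambda>j. c j - c' j) = 0\<close>, of j] c'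
      by (cases "j < totient f") auto
  qed
qed

lemma poly_zeta_eq_powbasis_comb:
  assumes f: "f > 0"
  shows "poly (of_rat_poly R) (zeta f) = powbasis_comb f (coeff (R mod min_poly_rat (zeta f)))"
proof -
  let ?P = "min_poly_rat (zeta f)"
  have "degree (R mod ?P) < totient f"
    by (rule degree_mod_min_poly_rat_zeta[OF f])
  then have "poly (of_rat_poly (R mod ?P)) (zeta f) = powbasis_comb f (coeff (R mod ?P))"
    unfolding powbasis_comb_def
    by (subst poly_eq_sum_lessThan[of _ "totient f"]) (simp_all add: coeff_map_poly)
  then show ?thesis
    using poly_mod_root[OF monic_int_root.min_poly_rat_root[OF monic_int_root_zeta[OF f]]] by simp
qed

lemma Kf_iff:
  assumes "f > 0" shows "z \<in> Kf f \<longleftrightarrow> (\<exists>R. z = poly (of_rat_poly R) (zeta f))"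
proof
  assume "z \<in> Kf f"
  then obtain c where "z = powbasis_comb f c"
    unfolding Kf_def by blast
  then show "\<exists>R. z = poly (of_rat_poly R) (zeta f)"
    unfolding powbasis_comb_eq_poly by blast
next
  assume "\<exists>R. z = poly (of_rat_poly R) (zeta f)"
  then obtain R where "z = poly (of_rat_poly R) (zeta f)" ..
  then show "z \<in> Kf f"
    unfolding Kf_def poly_zeta_eq_powbasis_comb[OF assms] by blast
qed

lemma min_poly_rat_zeta_root_totative:
  assumes f: "f > 0" and k: "k \<in> totatives f"
  shows "poly (of_rat_poly (min_poly_rat (zeta f))) (zeta f ^ k) = 0"
proof -
  have "zeta f ^ k \<in> {z. poly (of_int_poly (min_poly_int (zeta f))) z = 0}"
    unfolding roots_min_poly_zeta[OF f] using k by (rule imageI)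
  then show ?thesis
    by (simp add: monic_int_root.of_int_min_poly_int[OF monic_int_root_zeta[OF f], symmetric])
qed

lemma sigma_poly:
  assumes f: "f > 0" and k: "k \<in> totatives f"
  shows "sigma f k (poly (of_rat_poly R) (zeta f)) = poly (of_rat_poly R) (zeta f ^ k)"
proof -
  define Rm where "Rm = R mod min_poly_rat (zeta f)"
  have deg: "degree (of_rat_poly Rm :: complex poly) < totient f"
    unfolding Rm_def using degree_mod_min_poly_rat_zeta[OF f] by simp
  have "sigma f k (poly (of_rat_poly R) (zeta f))
      = (\<Sum>j<totient f. of_rat (coeff Rm j) * (zeta f ^ k) ^ j)"
    unfolding sigma_def poly_zeta_eq_powbasis_comb[OF f] coords_powbasis_comb[OF f] Rm_def
    by (intro sum.cong refl) (simp add: power_mult[symmetric] mult.commute)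
  also have "\<dots> = poly (of_rat_poly Rm) (zeta f ^ k)"
    using deg by (simp add: poly_eq_sum_lessThan coeff_map_poly)
  also have "\<dots> = poly (of_rat_poly R) (zeta f ^ k)"
    unfolding Rm_def by (rule poly_mod_root[OF min_poly_rat_zeta_root_totative[OF f k]])
  finally show ?thesis .
qed

lemma complex_of_rat_eq_of_real: "(of_rat q :: complex) = of_real (of_rat q)"
  by (cases q) (simp add: of_rat_rat)

lemma
  assumes f: "f > 0" and z: "z \<in> Kf f" and w: "w \<in> Kf f"
  shows Kf_add: "z + w \<in> Kf f" and Kf_mult: "z * w \<in> Kf f" and Kf_diff: "z - w \<in> Kf f"
proof -
  obtain R S where "z = poly (of_rat_poly R) (zeta f)" "w = poly (of_rat_poly S) (zeta f)"
    using z w unfolding Kf_iff[OF f] by blast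
  then have "z + w = poly (of_rat_poly (R + S)) (zeta f)" "z * w = poly (of_rat_poly (R * S)) (zeta f)"
    "z - w = poly (of_rat_poly (R - S)) (zeta f)"
    by (simp_all add: of_rat_poly_hom.hom_add of_rat_poly_hom.hom_mult of_rat_poly_hom.hom_minus)
  then show "z + w \<in> Kf f" "z * w \<in> Kf f" "z - w \<in> Kf f"
    unfolding Kf_iff[OF f] by blast+
qed

lemma Kf_of_rat:
  assumes "f > 0" shows "of_rat q \<in> Kf f"
proof -
  have "of_rat q = poly (of_rat_poly [:q:]) (zeta f)"
    by (simp add: of_rat_hom.map_poly_pCons_hom)
  then show ?thesis
    unfolding Kf_iff[OF assms] by blast
qed

lemma Kf_sum:
  assumes "f > 0" shows "(\<And>x. x \<in> A \<Longrightarrow> h x \<in> Kf f) \<Longrightarrow> sum h A \<in> Kf f"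
proof (induction A rule: infinite_finite_induct)
  case (insert x A)
  then show ?case by (simp add: Kf_add[OF assms])
qed (use Kf_of_rat[OF assms, of 0] in simp_all)

lemma powbasis_comb_in_Kf: "powbasis_comb f c \<in> Kf f"
  unfolding Kf_def by blast

lemma
  assumes f: "f > 0" and k: "k \<in> totatives f" and z: "z \<in> Kf f" and w: "w \<in> Kf f"
  shows sigma_add: "sigma f k (z + w) = sigma f k z + sigma f k w"
    and sigma_mult: "sigma f k (z * w) = sigma f k z * sigma f k w"
    and sigma_diff: "sigma f k (z - w) = sigma f k z - sigma f k w"
proof -
  obtain R S where R: "z = poly (of_rat_poly R) (zeta f)" and S: "w = poly (of_rat_poly S) (zeta f)"
    using z w unfolding Kf_iff[OF f] by blast
  have sz: "sigma f k z = poly (of_rat_poly R) (zeta f ^ k)"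
    unfolding R by (rule sigma_poly[OF f k])
  have sw: "sigma f k w = poly (of_rat_poly S) (zeta f ^ k)"
    unfolding S by (rule sigma_poly[OF f k])
  have add: "z + w = poly (of_rat_poly (R + S)) (zeta f)"
    unfolding R S by (simp add: of_rat_poly_hom.hom_add)
  show "sigma f k (z + w) = sigma f k z + sigma f k w"
    unfolding add sz sw sigma_poly[OF f k] by (simp add: of_rat_poly_hom.hom_add)
  have mult: "z * w = poly (of_rat_poly (R * S)) (zeta f)"
    unfolding R S by (simp add: of_rat_poly_hom.hom_mult)
  show "sigma f k (z * w) = sigma f k z * sigma f k w"
    unfolding mult sz sw sigma_poly[OF f k] by (simp add: of_rat_poly_hom.hom_mult)
  have diff: "z - w = poly (of_rat_poly (R - S)) (zeta f)"
    unfolding R S by (simp add: of_rat_poly_hom.hom_minus)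
  show "sigma f k (z - w) = sigma f k z - sigma f k w"
    unfolding diff sz sw sigma_poly[OF f k] by (simp add: of_rat_poly_hom.hom_minus)
qed

lemma sigma_of_rat:
  assumes "f > 0" "k \<in> totatives f" shows "sigma f k (of_rat q) = of_rat q"
  using sigma_poly[OF assms, of "[:q:]"] by (simp add: of_rat_hom.map_poly_pCons_hom)

lemma sigma_sum:
  assumes f: "f > 0" and k: "k \<in> totatives f" and h: "\<And>x. x \<in> A \<Longrightarrow> h x \<in> Kf f"
  shows "sigma f k (sum h A) = (\<Sum>x\<in>A. sigma f k (h x))"
  using h
proof (induction A rule: infinite_finite_induct)
  case (insert x A)
  then have "sigma f k (h x + sum h A) = sigma f k (h x) + sigma f k (sum h A)"
    by (intro sigma_add[OF f k] Kf_sum[OF f]) auto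
  with insert show ?case by simp
qed (use sigma_of_rat[OF f k, of 0] in simp_all)

text \<open>Complex conjugation is \<open>\<zeta> \<mapsto> \<zeta>\<^sup>f\<^sup>-\<^sup>1\<close> on \<open>\<rat>(\<zeta>)\<close>, so it commutes with every \<open>\<sigma>\<^sub>k\<close>.\<close>
lemma
  assumes f: "f > 0" and k: "k \<in> totatives f" and z: "z \<in> Kf f"
  shows Kf_cnj: "cnj z \<in> Kf f" and sigma_cnj: "sigma f k (cnj z) = cnj (sigma f k z)"
proof -
  obtain R where R: "z = poly (of_rat_poly R) (zeta f)"
    using z unfolding Kf_iff[OF f] by blast
  have real_coeffs: "coeff (of_rat_poly R :: complex poly) i \<in> \<real>" for i
    by (simp add: coeff_map_poly complex_of_rat_eq_of_real)
  define R' where "R' = R \<circ>\<^sub>p monom 1 (f - 1)"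
  have R': "poly (of_rat_poly R') x = poly (of_rat_poly R) (x ^ (f - 1))" for x :: complex
    unfolding R'_def
    by (simp add: of_rat_hom.map_poly_pcompose poly_pcompose of_rat_hom.map_poly_hom_monom poly_monom)
  have cnj_pow: "cnj (zeta f ^ j) = (zeta f ^ j) ^ (f - 1)" for j
    using cnj_root_of_unity[OF f zeta_power_root_of_unity[OF f]] .
  have "cnj z = poly (of_rat_poly R') (zeta f)"
    unfolding R R' poly_cnj_real[OF real_coeffs] using cnj_pow[of 1] by simp
  then show "cnj z \<in> Kf f"
    unfolding Kf_iff[OF f] by blast
  have "sigma f k (cnj z) = poly (of_rat_poly R') (zeta f ^ k)"
    unfolding \<open>cnj z = _\<close> by (rule sigma_poly[OF f k])
  also have "\<dots> = poly (of_rat_poly R) ((zeta f ^ k) ^ (f - 1))"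
    by (rule R')
  also have "\<dots> = cnj (sigma f k z)"
    unfolding R sigma_poly[OF f k] poly_cnj_real[OF real_coeffs] cnj_pow ..
  finally show "sigma f k (cnj z) = cnj (sigma f k z)" .
qed

lemma norm_sigma_powbasis_comb_le:
  assumes f: "f > 0" and k: "k \<in> totatives f" and c: "\<forall>l<totient f. \<bar>c l\<bar> \<le> 1"
  shows "norm (sigma f k (powbasis_comb f c)) \<le> real (totient f)"
proof -
  have "sigma f k (powbasis_comb f c) = poly (of_rat_poly (powbasis_poly f c)) (zeta f ^ k)"
    unfolding powbasis_comb_eq_poly by (rule sigma_poly[OF f k])
  also have "\<dots> = (\<Sum>j<totient f. of_rat (c j) * (zeta f ^ k) ^ j)"
    by (rule poly_powbasis_poly)
  also have "norm \<dots> \<le> (\<Sum>j<totient f. norm (of_rat (c j) * (zeta f ^ k) ^ j :: complex))"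
    by (rule norm_sum)
  also have "\<dots> \<le> (\<Sum>j<totient f. 1)"
  proof (rule sum_mono)
    fix j assume "j \<in> {..<totient f}"
    then have "\<bar>c j\<bar> \<le> 1" using c by simp
    have "norm (of_rat (c j) * (zeta f ^ k) ^ j :: complex) = norm (of_rat (c j) :: complex)"
      by (simp add: norm_mult norm_power)
    also have "\<dots> = \<bar>of_rat (c j)\<bar>"
      unfolding complex_of_rat_eq_of_real by (rule norm_of_real)
    also have "\<dots> \<le> 1"
      using \<open>\<bar>c j\<bar> \<le> 1\<close> by simp
    finally show "norm (of_rat (c j) * (zeta f ^ k) ^ j :: complex) \<le> 1" .
  qed
  finally show ?thesis by simp
qed

lemma powbasis_bounded_entries:
  assumes f: "f > 0"
    and M: "\<forall>i<d. \<forall>j<d. \<exists>c::nat \<Rightarrow> rat. (\<forall>l<totient f. \<bar>c l\<bar> \<le> 1) \<and> M i j = powbasis_comb f c"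
  shows "\<forall>i<d. \<forall>j<d. M i j \<in> Kf f"
    and "\<forall>s\<in>totatives f. \<forall>i<d. \<forall>j<d. norm (sigma f s (M i j)) \<le> real (totient f)"
  using M powbasis_comb_in_Kf norm_sigma_powbasis_comb_le[OF f] by metis+

lemma trK_mult_cnj:
  assumes f: "f > 0" and z: "z \<in> Kf f"
  shows "trK f (z * cnj z) = of_real (\<Sum>k\<in>totatives f. (norm (sigma f k z))\<^sup>2)"
proof -
  have "{k \<in> {1..f}. coprime k f} = totatives f"
    unfolding totatives_def by auto
  then have "trK f (z * cnj z) = (\<Sum>k\<in>totatives f. sigma f k z * cnj (sigma f k z))"
    unfolding trK_def using sigma_mult[OF f _ z Kf_cnj[OF f _ z]] sigma_cnj[OF f _ z]
    by (intro sum.cong) simp_all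
  then show ?thesis
    by (simp flip: complex_norm_square)
qed

section \<open>Operator norms\<close>

lemma vnorm_eq_sqrt_sum:
  assumes f: "f > 0" and x: "\<forall>t<d. x t \<in> Kf f"
  shows "vnorm f d x = sqrt (\<Sum>t<d. \<Sum>k\<in>totatives f. (norm (sigma f k (x t)))\<^sup>2)"
proof -
  have "herm f d x x = (\<Sum>t<d. of_real (\<Sum>k\<in>totatives f. (norm (sigma f k (x t)))\<^sup>2))"
    unfolding herm_def using x by (intro sum.cong refl) (simp add: trK_mult_cnj[OF f])
  then show ?thesis
    unfolding vnorm_def by simp
qed

lemma vnorm_nonneg:
  assumes "f > 0" "\<forall>t<d. x t \<in> Kf f" shows "vnorm f d x \<ge> 0"
  unfolding vnorm_eq_sqrt_sum[OF assms] by (simp add: sum_nonneg)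

lemma
  assumes f: "f > 0" and M: "\<forall>i<d. \<forall>j<d. M i j \<in> Kf f" and x: "\<forall>t<d. x t \<in> Kf f"
    and i: "i < d"
  shows mulv_in_Kf: "mulv d M x i \<in> Kf f"
    and sigma_mulv: "k \<in> totatives f \<Longrightarrow>
      sigma f k (mulv d M x i) = (\<Sum>j<d. sigma f k (M i j) * sigma f k (x j))"
proof -
  show "mulv d M x i \<in> Kf f"
    unfolding mulv_def using M x i by (intro Kf_sum[OF f] Kf_mult[OF f]) auto
  assume k: "k \<in> totatives f"
  have "sigma f k (mulv d M x i) = (\<Sum>j<d. sigma f k (M i j * x j))"
    unfolding mulv_def using M x i by (intro sigma_sum[OF f k] Kf_mult[OF f]) auto
  also have "\<dots> = (\<Sum>j<d. sigma f k (M i j) * sigma f k (x j))"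
    using M x i by (intro sum.cong refl sigma_mult[OF f k]) auto
  finally show "sigma f k (mulv d M x i) = (\<Sum>j<d. sigma f k (M i j) * sigma f k (x j))" .
qed

lemma norm_sum_mult_squared_le:
  fixes a y :: "'i \<Rightarrow> 'a::real_normed_div_algebra"
  assumes "\<And>j. j \<in> A \<Longrightarrow> norm (a j) \<le> b"
  shows "(norm (\<Sum>j\<in>A. a j * y j))\<^sup>2 \<le> real (card A) * b\<^sup>2 * (\<Sum>j\<in>A. (norm (y j))\<^sup>2)"
proof -
  have "norm (\<Sum>j\<in>A. a j * y j) \<le> (\<Sum>j\<in>A. b * norm (y j))"
    using assms by (intro order_trans[OF norm_sum] sum_mono)
      (simp add: norm_mult mult_right_mono)
  also have "\<dots> = b * (\<Sum>j\<in>A. norm (y j))"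
    by (simp add: sum_distrib_left)
  finally have "(norm (\<Sum>j\<in>A. a j * y j))\<^sup>2 \<le> (b * (\<Sum>j\<in>A. norm (y j)))\<^sup>2"
    by (rule power_mono) simp
  also have "\<dots> = b\<^sup>2 * (\<Sum>j\<in>A. norm (y j))\<^sup>2"
    by (simp add: power_mult_distrib)
  also have "\<dots> \<le> b\<^sup>2 * ((\<Sum>j\<in>A. (norm (y j))\<^sup>2) * real (card A))"
    by (intro mult_left_mono sum_squared_le_sum_of_squares) simp
  finally show ?thesis
    by (simp add: algebra_simps)
qed

lemma vnorm_mulv_le:
  assumes f: "f > 0" and M: "\<forall>i<d. \<forall>j<d. M i j \<in> Kf f" and x: "\<forall>t<d. x t \<in> Kf f"
    and "b \<ge> 0" and b: "\<forall>k\<in>totatives f. \<forall>i<d. \<forall>j<d. norm (sigma f k (M i j)) \<le> b"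
  shows "vnorm f d (mulv d M x) \<le> real d * b * vnorm f d x"
proof -
  define Q where "Q k = (\<Sum>j<d. (norm (sigma f k (x j)))\<^sup>2)" for k
  have y: "\<forall>t<d. mulv d M x t \<in> Kf f"
    using mulv_in_Kf[OF f M x] by blast
  have "(vnorm f d (mulv d M x))\<^sup>2
      = (\<Sum>i<d. \<Sum>k\<in>totatives f. (norm (sigma f k (mulv d M x i)))\<^sup>2)"
    unfolding vnorm_eq_sqrt_sum[OF f y] by (simp add: sum_nonneg)
  also have "\<dots> = (\<Sum>i<d. \<Sum>k\<in>totatives f. (norm (\<Sum>j<d. sigma f k (M i j) * sigma f k (x j)))\<^sup>2)"
    by (intro sum.cong refl) (simp add: sigma_mulv[OF f M x])
  also have "\<dots> \<le> (\<Sum>i<d. \<Sum>k\<in>totatives f. real d * b\<^sup>2 * Q k)"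
    unfolding Q_def
  proof (intro sum_mono)
    fix i k assume "i \<in> {..<d}" "k \<in> totatives f"
    then show "(norm (\<Sum>j<d. sigma f k (M i j) * sigma f k (x j)))\<^sup>2
        \<le> real d * b\<^sup>2 * (\<Sum>j<d. (norm (sigma f k (x j)))\<^sup>2)"
      using norm_sum_mult_squared_le[of "{..<d}" "\<lambda>j. sigma f k (M i j)" b "\<lambda>j. sigma f k (x j)"] b
      by simp
  qed
  also have "\<dots> = (\<Sum>i<d. real d * b\<^sup>2 * (\<Sum>k\<in>totatives f. Q k))"
    by (simp only: sum_distrib_left)
  also have "\<dots> = (real d * b)\<^sup>2 * (\<Sum>k\<in>totatives f. Q k)"
    unfolding sum_constant card_lessThan by (simp only: power2_eq_square mult_ac)
  also have "(\<Sum>k\<in>totatives f. Q k) = (\<Sum>t<d. \<Sum>k\<in>totatives f. (norm (sigma f k (x t)))\<^sup>2)"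
    unfolding Q_def by (rule sum.swap)
  also have "\<dots> = (vnorm f d x)\<^sup>2"
    unfolding vnorm_eq_sqrt_sum[OF f x] by (simp add: sum_nonneg)
  also have "(real d * b)\<^sup>2 * (vnorm f d x)\<^sup>2 = (real d * b * vnorm f d x)\<^sup>2"
    by (simp only: power_mult_distrib)
  finally have "(vnorm f d (mulv d M x))\<^sup>2 \<le> (real d * b * vnorm f d x)\<^sup>2" .
  moreover have "0 \<le> real d * b * vnorm f d x"
    using \<open>b \<ge> 0\<close> vnorm_nonneg[OF f x] by simp
  ultimately show ?thesis
    by (rule power2_le_imp_le)
qed

lemma opnorm_le:
  assumes f: "f > 0" and d: "d > 0" and M: "\<forall>i<d. \<forall>j<d. M i j \<in> Kf f"
    and b: "b \<ge> 0" and Mb: "\<forall>k\<in>totatives f. \<forall>i<d. \<forall>j<d. norm (sigma f k (M i j)) \<le> b"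
  shows "opnorm f d M \<le> real d * b"
  unfolding opnorm_def
proof (rule cSup_least)
  let ?x = "\<lambda>t::nat. 1 :: complex"
  have "(\<forall>t<d. ?x t \<in> Kf f) \<and> (\<exists>t<d. ?x t \<noteq> 0)"
    using Kf_of_rat[OF f, of 1] d by auto
  then have "vnorm f d (mulv d M ?x) / vnorm f d ?x \<in> {vnorm f d (mulv d M x) / vnorm f d x |x.
      (\<forall>t<d. x t \<in> Kf f) \<and> (\<exists>t<d. x t \<noteq> 0)}"
    unfolding mem_Collect_eq by (intro exI[of _ ?x]) simp
  then show "{vnorm f d (mulv d M x) / vnorm f d x |x.
      (\<forall>t<d. x t \<in> Kf f) \<and> (\<exists>t<d. x t \<noteq> 0)} \<noteq> {}"
    by (metis empty_iff)
next
  fix r assume "r \<in> {vnorm f d (mulv d M x) / vnorm f d x |x.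
      (\<forall>t<d. x t \<in> Kf f) \<and> (\<exists>t<d. x t \<noteq> 0)}"
  then obtain x where r: "r = vnorm f d (mulv d M x) / vnorm f d x" and x: "\<forall>t<d. x t \<in> Kf f"
    by blast
  have "vnorm f d (mulv d M x) \<le> real d * b * vnorm f d x"
    by (rule vnorm_mulv_le[OF f M x b Mb])
  moreover note vnorm_nonneg[OF f x]
  ultimately show "r \<le> real d * b"
    unfolding r using b by (cases "vnorm f d x = 0") (simp_all add: divide_le_eq)
qed

section \<open>Inverses of unitriangular matrices\<close>

lemma unitriangular_inverse_entry:
  assumes upper: "\<forall>i<d. \<forall>j<d. j < i \<longrightarrow> A i j = 0" and diag: "\<forall>i<d. A i i = 1"
    and AB: "matmul d A B i k = (if i = k then 1 else 0)" and i: "i < d"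
  shows "B i k = (if i = k then 1 else 0) - (\<Sum>j\<in>{i<..<d}. A i j * B j k)"
proof -
  have "matmul d A B i k = A i i * B i k + (\<Sum>j\<in>{..<d} - {i}. A i j * B j k)"
    unfolding matmul_def using i by (subst sum.remove[of _ i]) auto
  also have "(\<Sum>j\<in>{..<d} - {i}. A i j * B j k) = (\<Sum>j\<in>{i<..<d}. A i j * B j k)"
    using upper i by (intro sum.mono_neutral_right) auto
  finally show ?thesis
    using AB diag i by (simp add: algebra_simps)
qed

lemma unitriangular_inverse_in_Kf:
  assumes f: "f > 0" and upper: "\<forall>i<d. \<forall>j<d. j < i \<longrightarrow> A i j = 0" and diag: "\<forall>i<d. A i i = 1"
    and AK: "\<forall>i<d. \<forall>j<d. A i j \<in> Kf f"
    and AB: "\<forall>i<d. \<forall>k<d. matmul d A B i k = (if i = k then 1 else 0)"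
    and k: "k < d"
  shows "i < d \<Longrightarrow> B i k \<in> Kf f"
proof (induction "d - i" arbitrary: i rule: less_induct)
  case less
  have "B j k \<in> Kf f" if "j \<in> {i<..<d}" for j
    using that by (intro less.hyps) auto
  then have "A i j * B j k \<in> Kf f" if "j \<in> {i<..<d}" for j
    using AK less.prems that by (intro Kf_mult[OF f]) auto
  then have "(\<Sum>j\<in>{i<..<d}. A i j * B j k) \<in> Kf f"
    by (rule Kf_sum[OF f])
  moreover have "(if i = k then 1 else 0) \<in> Kf f"
    using Kf_of_rat[OF f, of 0] Kf_of_rat[OF f, of 1] by simp
  ultimately show ?case
    unfolding unitriangular_inverse_entry[OF upper diag AB[rule_format, OF less.prems k] less.prems]
    by (intro Kf_diff[OF f])
qed

lemma sum_geometric_tail: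
  fixes x :: real
  shows "i < d \<Longrightarrow> (\<Sum>j\<in>{i<..<d}. x * (x + 1) ^ (d - 1 - j)) = (x + 1) ^ (d - 1 - i) - 1"
proof (induction d)
  case (Suc d)
  show ?case
  proof (cases "i < d")
    case False
    with Suc.prems show ?thesis by simp
  next
    case True
    have "{i<..<Suc d} = insert d {i<..<d}"
      using True by auto
    then have "(\<Sum>j\<in>{i<..<Suc d}. x * (x + 1) ^ (Suc d - 1 - j))
        = x * (x + 1) ^ (Suc d - 1 - d) + (\<Sum>j\<in>{i<..<d}. x * (x + 1) ^ (Suc d - 1 - j))"
      by simp
    also have "(\<Sum>j\<in>{i<..<d}. x * (x + 1) ^ (Suc d - 1 - j))
        = (x + 1) * (\<Sum>j\<in>{i<..<d}. x * (x + 1) ^ (d - 1 - j))"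
      unfolding sum_distrib_left
    proof (rule sum.cong[OF refl])
      fix j assume "j \<in> {i<..<d}"
      then have "Suc d - 1 - j = Suc (d - 1 - j)" by auto
      then show "x * (x + 1) ^ (Suc d - 1 - j) = (x + 1) * (x * (x + 1) ^ (d - 1 - j))"
        by simp
    qed
    also have "\<dots> = (x + 1) * ((x + 1) ^ (d - 1 - i) - 1)"
      by (simp only: Suc.IH[OF True])
    also have "x * (x + 1) ^ (Suc d - 1 - d) + \<dots> = (x + 1) ^ Suc (d - 1 - i) - 1"
      by (simp add: algebra_simps)
    also have "Suc (d - 1 - i) = Suc d - 1 - i"
      using True by simp
    finally show ?thesis .
  qed
qed simp

lemma backward_recursion_bound:
  fixes b :: "nat \<Rightarrow> real" and x :: real
  assumes "x \<ge> 0" and rec: "\<And>i. i < d \<Longrightarrow> b i \<le> 1 + (\<Sum>j\<in>{i<..<d}. x * b j)"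
  shows "i < d \<Longrightarrow> b i \<le> (x + 1) ^ (d - 1 - i)"
proof (induction "d - i" arbitrary: i rule: less_induct)
  case less
  have "(\<Sum>j\<in>{i<..<d}. x * b j) \<le> (\<Sum>j\<in>{i<..<d}. x * (x + 1) ^ (d - 1 - j))"
  proof (rule sum_mono)
    fix j assume "j \<in> {i<..<d}"
    then have "b j \<le> (x + 1) ^ (d - 1 - j)"
      by (intro less.hyps) auto
    then show "x * b j \<le> x * (x + 1) ^ (d - 1 - j)"
      using assms(1) by (rule mult_left_mono)
  qed
  then show ?case
    using rec[OF less.prems] sum_geometric_tail[OF less.prems] by simp
qed

lemma unitriangular_inverse_sigma_bound:
  assumes f: "f > 0" and s: "s \<in> totatives f"
    and upper: "\<forall>i<d. \<forall>j<d. j < i \<longrightarrow> A i j = 0" and diag: "\<forall>i<d. A i i = 1"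
    and AK: "\<forall>i<d. \<forall>j<d. A i j \<in> Kf f"
    and Ab: "\<forall>i<d. \<forall>j<d. norm (sigma f s (A i j)) \<le> x"
    and AB: "\<forall>i<d. \<forall>k<d. matmul d A B i k = (if i = k then 1 else 0)"
    and k: "k < d" and i: "i < d"
  shows "norm (sigma f s (B i k)) \<le> (x + 1) ^ (d - 1 - i)"
proof (rule backward_recursion_bound[OF _ _ i])
  have "norm (sigma f s (A i i)) \<le> x"
    using Ab i by blast
  then show "x \<ge> 0"
    by (rule order_trans[OF norm_ge_zero])
  have BK: "B j k \<in> Kf f" if "j < d" for j
    by (rule unitriangular_inverse_in_Kf[OF f upper diag AK AB k that])
  fix i assume i: "i < d"
  let ?\<delta> = "if i = k then 1 else 0 :: complex"
  have \<delta>: "?\<delta> \<in> Kf f" "sigma f s ?\<delta> = ?\<delta>"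
    using Kf_of_rat[OF f, of 0] Kf_of_rat[OF f, of 1] sigma_of_rat[OF f s, of 0]
      sigma_of_rat[OF f s, of 1] by simp_all
  have AB_K: "A i j * B j k \<in> Kf f" if "j \<in> {i<..<d}" for j
    using AK BK i that by (intro Kf_mult[OF f]) auto
  have "sigma f s (B i k) = sigma f s ?\<delta> - sigma f s (\<Sum>j\<in>{i<..<d}. A i j * B j k)"
    unfolding unitriangular_inverse_entry[OF upper diag AB[rule_format, OF i k] i]
    using AB_K by (intro sigma_diff[OF f s \<delta>(1) Kf_sum[OF f]])
  also have "sigma f s (\<Sum>j\<in>{i<..<d}. A i j * B j k)
      = (\<Sum>j\<in>{i<..<d}. sigma f s (A i j * B j k))"
    by (rule sigma_sum[OF f s AB_K])
  also have "\<dots> = (\<Sum>j\<in>{i<..<d}. sigma f s (A i j) * sigma f s (B j k))"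
    using AK BK i by (intro sum.cong refl sigma_mult[OF f s]) auto
  finally have "norm (sigma f s (B i k))
      \<le> norm ?\<delta> + norm (\<Sum>j\<in>{i<..<d}. sigma f s (A i j) * sigma f s (B j k))"
    by (simp only: \<delta>(2) norm_triangle_ineq4)
  also have "norm ?\<delta> \<le> 1"
    by simp
  also have "norm (\<Sum>j\<in>{i<..<d}. sigma f s (A i j) * sigma f s (B j k))
      \<le> (\<Sum>j\<in>{i<..<d}. norm (sigma f s (A i j)) * norm (sigma f s (B j k)))"
    by (rule order_trans[OF norm_sum]) (simp add: norm_mult)
  also have "\<dots> \<le> (\<Sum>j\<in>{i<..<d}. x * norm (sigma f s (B j k)))"
    using Ab i by (intro sum_mono mult_right_mono) auto
  finally show "norm (sigma f s (B i k)) \<le> 1 + (\<Sum>j\<in>{i<..<d}. x * norm (sigma f s (B j k)))"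
    by simp
qed

lemma dim_mult_power_le_powr:
  fixes n :: real assumes "n \<ge> 1"
  shows "real d * (n + 1) ^ d \<le> (2 * n) powr (2 * real d)"
proof -
  have "real d < 2 ^ d"
    using less_exp[of d] of_nat_less_iff[of d "2 ^ d"] by simp
  also have "(2::real) ^ d \<le> (2 * n) ^ d"
    using assms by (intro power_mono) auto
  finally have "real d \<le> (2 * n) ^ d" by simp
  moreover have "(n + 1) ^ d \<le> (2 * n) ^ d"
    using assms by (intro power_mono) auto
  ultimately have "real d * (n + 1) ^ d \<le> (2 * n) ^ d * (2 * n) ^ d"
    by (rule mult_mono) (use assms in simp_all)
  also have "\<dots> = (2 * n) ^ (2 * d)"
    by (simp only: power_add[symmetric] mult_2)
  also have "\<dots> = (2 * n) powr (2 * real d)"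
    using assms powr_realpow[of "2 * n" "2 * d"] by simp
  finally show ?thesis .
qed

lemma opnorm_unitriangular_inverse_le:
  assumes f: "f > 0" and d: "d > 0" and x: "x \<ge> 0"
    and upper: "\<forall>i<d. \<forall>j<d. j < i \<longrightarrow> A i j = 0" and diag: "\<forall>i<d. A i i = 1"
    and AK: "\<forall>i<d. \<forall>j<d. A i j \<in> Kf f"
    and Ab: "\<forall>s\<in>totatives f. \<forall>i<d. \<forall>j<d. norm (sigma f s (A i j)) \<le> x"
    and AB: "\<forall>i<d. \<forall>k<d. matmul d A B i k = (if i = k then 1 else 0)"
  shows "opnorm f d B \<le> real d * (x + 1) ^ d"
proof (rule opnorm_le[OF f d])
  show "\<forall>i<d. \<forall>k<d. B i k \<in> Kf f"
    using unitriangular_inverse_in_Kf[OF f upper diag AK AB] by blast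
  show "\<forall>s\<in>totatives f. \<forall>i<d. \<forall>k<d. norm (sigma f s (B i k)) \<le> (x + 1) ^ d"
  proof (intro ballI allI impI)
    fix s i k assume s: "s \<in> totatives f" and i: "i < d" and k: "k < d"
    have "\<forall>i<d. \<forall>j<d. norm (sigma f s (A i j)) \<le> x"
      using Ab s by blast
    then have "norm (sigma f s (B i k)) \<le> (x + 1) ^ (d - 1 - i)"
      by (rule unitriangular_inverse_sigma_bound[OF f s upper diag AK _ AB k i])
    also have "\<dots> \<le> (x + 1) ^ d"
      using x by (intro power_increasing) auto
    finally show "norm (sigma f s (B i k)) \<le> (x + 1) ^ d" .
  qed
qed (use x in simp)

theorem lemma13:
  shows "\<exists>C>0. \<forall>(f::nat) (d::nat) (A::nat \<Rightarrow> nat \<Rightarrow> complex).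
    f \<ge> 1 \<and> d \<ge> 1
    \<and> (\<forall>i<d. \<forall>j<d. j < i \<longrightarrow> A i j = 0)
    \<and> (\<forall>i<d. A i i = 1)
    \<and> (\<forall>i<d. \<forall>j<d. \<exists>c::nat \<Rightarrow> rat.
           (\<forall>l<totient f. \<bar>c l\<bar> \<le> 1) \<and> A i j = powbasis_comb f c)
    \<longrightarrow> opnorm f d A \<le> real d * real (totient f) powr (3/2)
      \<and> (\<forall>B. (\<forall>i<d. \<forall>k<d. matmul d A B i k = (if i = k then 1 else 0))
              \<and> (\<forall>i<d. \<forall>k<d. matmul d B A i k = (if i = k then 1 else 0))
           \<longrightarrow> opnorm f d B \<le> (2 * real (totient f)) powr (C * real d))"
proof (intro exI[of _ 2] conjI allI impI)
  fix f d :: nat and A B :: "nat \<Rightarrow> nat \<Rightarrow> complex"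
  assume H: "f \<ge> 1 \<and> d \<ge> 1 \<and> (\<forall>i<d. \<forall>j<d. j < i \<longrightarrow> A i j = 0) \<and> (\<forall>i<d. A i i = 1)
    \<and> (\<forall>i<d. \<forall>j<d. \<exists>c::nat \<Rightarrow> rat. (\<forall>l<totient f. \<bar>c l\<bar> \<le> 1) \<and> A i j = powbasis_comb f c)"
  then have f: "f > 0" and d: "d > 0" by auto
  define n where "n = real (totient f)"
  have n: "n \<ge> 1"
    unfolding n_def using f by (simp add: Suc_leI)
  have "\<forall>i<d. \<forall>j<d. \<exists>c::nat \<Rightarrow> rat. (\<forall>l<totient f. \<bar>c l\<bar> \<le> 1) \<and> A i j = powbasis_comb f c"
    using H by blast
  note A = powbasis_bounded_entries[OF f this, folded n_def]
  have "opnorm f d A \<le> real d * n"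
    using opnorm_le[OF f d A(1) _ A(2)] n by simp
  also have "\<dots> \<le> real d * n powr (3/2)"
    using n powr_mono[of 1 "3/2" n] by (intro mult_left_mono) auto
  finally show "opnorm f d A \<le> real d * real (totient f) powr (3/2)"
    unfolding n_def .
  assume "(\<forall>i<d. \<forall>k<d. matmul d A B i k = (if i = k then 1 else 0))
    \<and> (\<forall>i<d. \<forall>k<d. matmul d B A i k = (if i = k then 1 else 0))"
  then have "opnorm f d B \<le> real d * (n + 1) ^ d"
    using H A n by (intro opnorm_unitriangular_inverse_le[OF f d]) auto
  also have "\<dots> \<le> (2 * n) powr (2 * real d)"
    by (rule dim_mult_power_le_powr[OF n])
  finally show "opnorm f d B \<le> (2 * real (totient f)) powr (2 * real d)"
    unfolding n_def .
qed simp

end
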